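(* Let $G=(V,E)$ be a simple undirected graph with $V=[n]$ and let $k\ge 1$ be an integer. Let (P1) be the problem: maximize $\sum_{r\in[k]}\sum_{i\in[n]}Y^{rr}_{ii}$ over $Y\in\mathbb S^{n(k+1)}$ (with $n\times n$ blocks $Y^{rl}$, $r,l\in[k+1]$) subject to $Y^{rr}_{ij}=0$ for $\{i,j\}\in E$, $r\in[k]$; $\sum_{r\in[k+1]}Y^{rr}_{ii}=1$ for $i\in[n]$; $Y^{rl}_{ii}=0$ for $i\in[n]$, $r,l\in[k+1]$, $r\ne l$; $Y\ge 0$; $\begin{bmatrix}1&\mathrm{diag}(Y)^{\top}\\ \mathrm{diag}(Y)&Y\end{bmatrix}\succeq0$. Let (P2) be the problem: maximize $\sum_{r\in[k]}\sum_{i\in[n]}Y^{rr}_{ii}$ over $Y\in\mathbb S^{nk}$ (with $n\times n$ blocks $Y^{rl}$, $r,l\in[k]$) subject to $Y^{rr}_{ij}=0$ for $\{i,j\}\in E$, $r\in[k]$; $Y^{rl}_{ii}=0$ for $i\in[n]$, $r\ne l$; $Y\ge0$; $\begin{bmatrix}1&\mathrm{diag}(Y)^{\top}\\ \mathrm{diag}(Y)&Y\end{bmatrix}\succeq0$; together with the additional inequalities $1-\sum_{r\in[k]}Y^{rr}_{ii}-\sum_{r\in[k]}Y^{rr}_{jj}+\sum_{r,l\in[k]}Y^{rl}_{ij}\ge0$ for all $i,j\in[n]$, $i>j$, and $Y^{ll}_{ii}-\sum_{r\in[k]}Y^{rl}_{ij}\ge0$ for all $i\ne j$ in $[n]$ and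 $l\in[k]$. Then (P1) and (P2) are equivalent: every feasible solution of one yields a feasible solution of the other with the same objective value; in particular their optimal values coincide.
   Context: $\mathbb S^m$ is the space of real symmetric $m\times m$ matrices; $\mathrm{diag}(Y)$ is the vector of diagonal entries; $Y\ge0$ is entrywise nonnegativity; $\succeq0$ is positive semidefiniteness. *)

theory Defs
  imports Complex_Main
begin

(* Matrices whose rows/columns are indexed by pairs (r,i): block index r, vertex i.
   Entry  Y (r,i) (l,j)  is  Y^{rl}_{ij}  in the paper.  Indices are 0-based:
   blocks r < K, vertices i < n. *)

definition idx :: "nat \<Rightarrow> nat \<Rightarrow> (nat \<times> nat) set" where
  "idx K n = {..<K} \<times> {..<n}"

definition sym_on :: "'a set \<Rightarrow> ('a \<Rightarrow> 'a \<Rightarrow> real) \<Rightarrow> bool" where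
  "sym_on I M \<longleftrightarrow> (\<forall>a\<in>I. \<forall>b\<in>I. M a b = M b a)"

definition psd_on :: "'a set \<Rightarrow> ('a \<Rightarrow> 'a \<Rightarrow> real) \<Rightarrow> bool" where
  "psd_on I M \<longleftrightarrow> sym_on I M \<and>
     (\<forall>v. 0 \<le> (\<Sum>a\<in>I. \<Sum>b\<in>I. v a * M a b * v b))"

(* The bordered matrix [[1, diag(Y)^T],[diag(Y), Y]], indexed by None (the extra
   row/column) and Some (r,i). *)
definition bordered :: "((nat \<times> nat) \<Rightarrow> (nat \<times> nat) \<Rightarrow> real)
    \<Rightarrow> (nat \<times> nat) option \<Rightarrow> (nat \<times> nat) option \<Rightarrow> real" where
  "bordered Y x y = (case (x, y) of
       (None, None) \<Rightarrow> 1
     | (None, Some b) \<Rightarrow> Y b b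
     | (Some a, None) \<Rightarrow> Y a a
     | (Some a, Some b) \<Rightarrow> Y a b)"

definition bidx :: "nat \<Rightarrow> nat \<Rightarrow> (nat \<times> nat) option set" where
  "bidx K n = insert None (Some ` idx K n)"

definition simple_graph :: "nat \<Rightarrow> nat set set \<Rightarrow> bool" where
  "simple_graph n E \<longleftrightarrow> (\<forall>e\<in>E. \<exists>i j. i < n \<and> j < n \<and> i \<noteq> j \<and> e = {i, j})"

definition objective :: "nat \<Rightarrow> nat \<Rightarrow> ((nat \<times> nat) \<Rightarrow> (nat \<times> nat) \<Rightarrow> real) \<Rightarrow> real" where
  "objective n k Y = (\<Sum>r<k. \<Sum>i<n. Y (r,i) (r,i))"

(* feasibility for (P1): Y in S^{n(k+1)}, blocks r,l in [k+1] (0-based: r,l < k+1,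
   the last block being r = k) *)
definition feasible_P1 :: "nat \<Rightarrow> nat set set \<Rightarrow> nat \<Rightarrow> ((nat \<times> nat) \<Rightarrow> (nat \<times> nat) \<Rightarrow> real) \<Rightarrow> bool" where
  "feasible_P1 n E k Y \<longleftrightarrow>
     sym_on (idx (Suc k) n) Y \<and>
     (\<forall>r<k. \<forall>i<n. \<forall>j<n. {i, j} \<in> E \<longrightarrow> Y (r,i) (r,j) = 0) \<and>
     (\<forall>i<n. (\<Sum>r<Suc k. Y (r,i) (r,i)) = 1) \<and>
     (\<forall>i<n. \<forall>r<Suc k. \<forall>l<Suc k. r \<noteq> l \<longrightarrow> Y (r,i) (l,i) = 0) \<and>
     (\<forall>a\<in>idx (Suc k) n. \<forall>b\<in>idx (Suc k) n. 0 \<le> Y a b) \<and>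
     psd_on (bidx (Suc k) n) (bordered Y)"

definition feasible_P2 :: "nat \<Rightarrow> nat set set \<Rightarrow> nat \<Rightarrow> ((nat \<times> nat) \<Rightarrow> (nat \<times> nat) \<Rightarrow> real) \<Rightarrow> bool" where
  "feasible_P2 n E k Y \<longleftrightarrow>
     sym_on (idx k n) Y \<and>
     (\<forall>r<k. \<forall>i<n. \<forall>j<n. {i, j} \<in> E \<longrightarrow> Y (r,i) (r,j) = 0) \<and>
     (\<forall>i<n. \<forall>r<k. \<forall>l<k. r \<noteq> l \<longrightarrow> Y (r,i) (l,i) = 0) \<and>
     (\<forall>a\<in>idx k n. \<forall>b\<in>idx k n. 0 \<le> Y a b) \<and>
     psd_on (bidx k n) (bordered Y) \<and>
     (\<forall>i<n. \<forall>j<n. j < i \<longrightarrow>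
        0 \<le> 1 - (\<Sum>r<k. Y (r,i) (r,i)) - (\<Sum>r<k. Y (r,j) (r,j))
               + (\<Sum>r<k. \<Sum>l<k. Y (r,i) (l,j))) \<and>
     (\<forall>i<n. \<forall>j<n. i \<noteq> j \<longrightarrow> (\<forall>l<k.
        0 \<le> Y (l,i) (l,i) - (\<Sum>r<k. Y (r,i) (l,j))))"

end

theory Submission
  imports Defs
begin

text \<open>
  Read \<open>Y\<close> as the second-moment matrix of colour indicators \<open>x\<^sub>r\<^sub>i\<close> (vertex \<open>i\<close> has
  colour \<open>r\<close>), the extra block \<open>r = k\<close> of (P1) meaning "uncoloured".  In (P1) the quadratic
  form of the bordered matrix vanishes at the vector of \<open>1 - \<Sum>\<^sub>r x\<^sub>r\<^sub>i\<close>, so that vector lies in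
  its kernel: for every vertex \<open>i\<close>, each row of \<open>Y\<close> summed over the colours at \<open>i\<close> equals its
  diagonal entry.  Hence the last block of a (P1) solution is determined by the first \<open>k\<close> blocks,
  and its nonnegativity amounts to two inequalities aggregated over colours,
  \<open>1 - \<Sum>\<^sub>r Y\<^sup>r\<^sup>r\<^sub>i\<^sub>i - \<Sum>\<^sub>r Y\<^sup>r\<^sup>r\<^sub>j\<^sub>j + \<Sum>\<^sub>r\<^sub>,\<^sub>l Y\<^sup>r\<^sup>l\<^sub>i\<^sub>j \<ge> 0\<close> and
  \<open>\<Sum>\<^sub>r\<^sub>,\<^sub>l Y\<^sup>r\<^sup>l\<^sub>i\<^sub>j \<le> \<Sum>\<^sub>r Y\<^sup>r\<^sup>r\<^sub>i\<^sub>i\<close>.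
  Conversely, appending that block to a (P2) solution is a congruence of the bordered matrix,
  so positive semidefiniteness is kept.  The inequalities of (P2) are stated colour by colour;
  averaging \<open>Y\<close> over the \<open>k\<close> cyclic shifts of the colours preserves all other constraints and
  the objective and makes every diagonal block the same, after which the per-colour and the
  aggregated inequalities are equivalent.
\<close>

definition quad_form :: "'a set \<Rightarrow> ('a \<Rightarrow> 'a \<Rightarrow> real) \<Rightarrow> ('a \<Rightarrow> real) \<Rightarrow> real" where
  "quad_form I M v = (\<Sum>a\<in>I. \<Sum>b\<in>I. v a * M a b * v b)"

lemma psd_on_iff_quad_form: "psd_on I M \<longleftrightarrow> sym_on I M \<and> (\<forall>v. 0 \<le> quad_form I M v)"
  by (simp add: psd_on_def quad_form_def)

lemma psd_on_quad_form_nonneg: "psd_on I M \<Longrightarrow> 0 \<le> quad_form I M v"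
  by (simp add: psd_on_iff_quad_form)

lemma psd_on_scale:
  assumes "psd_on I M" "0 \<le> w"
  shows "psd_on I (\<lambda>a b. w * M a b)"
proof -
  have "quad_form I (\<lambda>a b. w * M a b) v = w * quad_form I M v" for v
    by (simp add: quad_form_def sum_distrib_left mult_ac)
  with assms show ?thesis
    by (simp add: psd_on_iff_quad_form sym_on_def)
qed

lemma psd_on_sum:
  assumes "\<And>c. c \<in> C \<Longrightarrow> psd_on I (M c)"
  shows "psd_on I (\<lambda>a b. \<Sum>c\<in>C. M c a b)"
proof -
  have "quad_form I (\<lambda>a b. \<Sum>c\<in>C. M c a b) v = (\<Sum>c\<in>C. quad_form I (M c) v)" for v
    unfolding quad_form_def by (simp add: sum_distrib_left sum_distrib_right sum.swap[of _ C I])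
  with assms show ?thesis
    by (auto simp: psd_on_iff_quad_form sym_on_def intro: sum_nonneg sum.cong)
qed

lemma quad_form_congruence:
  assumes "\<And>a b. a \<in> J \<Longrightarrow> b \<in> J \<Longrightarrow> M' a b = (\<Sum>x\<in>I. \<Sum>y\<in>I. A a x * M x y * A b y)"
  shows "quad_form J M' v = quad_form I M (\<lambda>x. \<Sum>a\<in>J. v a * A a x)"
proof -
  have "quad_form J M' v = (\<Sum>a\<in>J. \<Sum>b\<in>J. \<Sum>x\<in>I. \<Sum>y\<in>I. (v a * A a x) * M x y * (v b * A b y))"
    unfolding quad_form_def using assms
    by (intro sum.cong refl) (simp add: sum_distrib_left sum_distrib_right mult_ac)
  also have "\<dots> = (\<Sum>x\<in>I. \<Sum>y\<in>I. \<Sum>a\<in>J. \<Sum>b\<in>J. (v a * A a x) * M x y * (v b * A b y))"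
    by (simp only: sum.swap[of _ J I])
  also have "\<dots> = quad_form I M (\<lambda>x. \<Sum>a\<in>J. v a * A a x)"
    unfolding quad_form_def
    by (intro sum.cong refl) (simp only: sum_distrib_left sum_distrib_right mult.assoc, rule sum.swap)
  finally show ?thesis .
qed

lemma psd_on_congruence:
  assumes "psd_on I M"
    and "\<And>a b. a \<in> J \<Longrightarrow> b \<in> J \<Longrightarrow> M' a b = (\<Sum>x\<in>I. \<Sum>y\<in>I. A a x * M x y * A b y)"
  shows "psd_on J M'"
proof -
  have "sym_on J M'"
  proof (unfold sym_on_def, intro ballI)
    fix a b assume "a \<in> J" "b \<in> J"
    have "(\<Sum>x\<in>I. \<Sum>y\<in>I. A a x * M x y * A b y) = (\<Sum>y\<in>I. \<Sum>x\<in>I. A b y * M y x * A a x)"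
      using assms(1) by (subst sum.swap) (auto simp: psd_on_def sym_on_def mult_ac intro!: sum.cong)
    with \<open>a \<in> J\<close> \<open>b \<in> J\<close> show "M' a b = M' b a"
      by (simp add: assms(2))
  qed
  with assms(1) show ?thesis
    by (simp add: psd_on_iff_quad_form quad_form_congruence[OF assms(2)])
qed

lemma psd_on_reindex:
  assumes "psd_on I M" "finite I" "\<sigma> ` J \<subseteq> I"
  shows "psd_on J (\<lambda>a b. M (\<sigma> a) (\<sigma> b))"
proof (rule psd_on_congruence[OF assms(1), where A = "\<lambda>a x. if x = \<sigma> a then 1 else 0"])
  show "M (\<sigma> a) (\<sigma> b) =
      (\<Sum>x\<in>I. \<Sum>y\<in>I. (if x = \<sigma> a then 1 else 0) * M x y * (if y = \<sigma> b then 1 else 0))"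
    if "a \<in> J" "b \<in> J" for a b
    using that assms(2,3)
    by (simp add: image_subset_iff if_distrib[of "\<lambda>z. z * _"] if_distrib[of "\<lambda>z. _ * z"] cong: if_cong)
qed

lemma linear_coeff_zero_if_quadratic_nonneg:
  fixes b c :: real
  assumes "\<And>t. 0 \<le> 2 * b * t + c * t\<^sup>2"
  shows "b = 0"
proof -
  have "0 \<le> c"
    using assms[of 1] assms[of "-1"] by simp
  have "0 \<le> 2 * b * (- b / (c + 1)) + c * (- b / (c + 1))\<^sup>2"
    by (rule assms)
  also have "\<dots> = - ((c + 2) * (b / (c + 1))\<^sup>2)"
    using \<open>0 \<le> c\<close> by (simp add: divide_simps power2_eq_square) algebra
  finally show "b = 0"
    using \<open>0 \<le> c\<close> by (simp add: mult_le_0_iff)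
qed

lemma psd_on_kernel:
  assumes "psd_on I M" "finite I" "quad_form I M v = 0" "a \<in> I"
  shows "(\<Sum>b\<in>I. M a b * v b) = 0"
proof (rule linear_coeff_zero_if_quadratic_nonneg)
  fix t
  define e where "e b = (if b = a then 1 else 0 :: real)" for b
  have row: "(\<Sum>p\<in>I. e p * f p) = f a" "(\<Sum>p\<in>I. f p * e p) = f a" for f
    using assms(2,4) by (simp_all add: e_def if_distrib[of "\<lambda>z. z * _"] if_distrib[of "\<lambda>z. _ * z"] cong: if_cong)
  have "quad_form I M (\<lambda>b. v b + t * e b) = quad_form I M v
      + t * (\<Sum>p\<in>I. e p * (\<Sum>q\<in>I. M p q * v q)) + t * (\<Sum>p\<in>I. v p * (\<Sum>q\<in>I. M p q * e q))
      + t\<^sup>2 * (\<Sum>p\<in>I. e p * (\<Sum>q\<in>I. M p q * e q))"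
    by (simp add: quad_form_def algebra_simps power2_eq_square sum.distrib sum_distrib_left)
  also have "(\<Sum>p\<in>I. v p * (\<Sum>q\<in>I. M p q * e q)) = (\<Sum>q\<in>I. M a q * v q)"
    using assms(1,4) by (auto simp: row[of "M _"] mult.commute psd_on_def sym_on_def intro: sum.cong)
  finally show "0 \<le> 2 * (\<Sum>b\<in>I. M a b * v b) * t + M a a * t\<^sup>2"
    using psd_on_quad_form_nonneg[OF assms(1), of "\<lambda>b. v b + t * e b"] assms(3) by (simp add: row mult_ac)
qed

lemma inj_on_add_mod: "inj_on (\<lambda>r::nat. (r + c) mod k) {..<k}"
proof -
  have "r = r'" if "r' \<le> r" "r < k" "(r + c) mod k = (r' + c) mod k" for r r'
  proof -
    have "k dvd r - r'"
      using that mod_eq_dvd_iff_nat[of "r' + c" "r + c" k] by simp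
    with that show ?thesis
      by (cases "r - r' = 0") (auto dest: dvd_imp_le)
  qed
  then show ?thesis
    unfolding inj_on_def by (metis lessThan_iff nat_le_linear)
qed

lemma bij_betw_add_mod: "bij_betw (\<lambda>r::nat. (r + c) mod k) {..<k} {..<k}"
proof (cases "k = 0")
  case False
  then show ?thesis
    using inj_on_add_mod by (simp add: bij_betw_def endo_inj_surj image_subsetI)
qed (simp add: bij_betw_def)

lemma finite_bidx [simp]: "finite (bidx K n)"
  by (simp add: bidx_def idx_def)

lemma sum_bidx: "(\<Sum>x\<in>bidx K n. f x) = f None + (\<Sum>r<K. \<Sum>j<n. f (Some (r, j)))"
  by (simp add: bidx_def idx_def sum.reindex sum.cartesian_product)

lemma psd_on_bordered_imp_sym_on: "psd_on (bidx K n) (bordered Y) \<Longrightarrow> sym_on (idx K n) Y"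
  by (force simp: psd_on_def sym_on_def bidx_def bordered_def)

lemma psd_on_bordered_mono:
  assumes "psd_on (bidx K n) (bordered Y)" "k \<le> K"
  shows "psd_on (bidx k n) (bordered Y)"
proof -
  have "id ` bidx k n \<subseteq> bidx K n"
    using assms(2) by (auto simp: bidx_def idx_def)
  from psd_on_reindex[OF assms(1) finite_bidx this] show ?thesis
    by simp
qed

definition diag_sum :: "nat \<Rightarrow> ((nat \<times> nat) \<Rightarrow> (nat \<times> nat) \<Rightarrow> real) \<Rightarrow> nat \<Rightarrow> real" where
  "diag_sum K Y i = (\<Sum>r<K. Y (r, i) (r, i))"

definition cross_sum :: "nat \<Rightarrow> ((nat \<times> nat) \<Rightarrow> (nat \<times> nat) \<Rightarrow> real) \<Rightarrow> nat \<Rightarrow> nat \<Rightarrow> real" where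
  "cross_sum K Y i j = (\<Sum>r<K. \<Sum>l<K. Y (r, i) (l, j))"

definition colour_exclusive :: "nat \<Rightarrow> ((nat \<times> nat) \<Rightarrow> (nat \<times> nat) \<Rightarrow> real) \<Rightarrow> nat \<Rightarrow> bool" where
  "colour_exclusive K Y i \<longleftrightarrow> (\<forall>r<K. \<forall>l<K. r \<noteq> l \<longrightarrow> Y (r, i) (l, i) = 0)"

lemma objective_eq_sum_diag_sum: "objective n k Y = (\<Sum>i<n. diag_sum k Y i)"
  unfolding objective_def diag_sum_def by (rule sum.swap)

lemma cross_sum_commute:
  assumes "sym_on (idx K n) Y" "i < n" "j < n"
  shows "cross_sum K Y j i = cross_sum K Y i j"
proof -
  have "cross_sum K Y j i = (\<Sum>r<K. \<Sum>l<K. Y (l, i) (r, j))"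
    unfolding cross_sum_def using assms by (intro sum.cong refl) (auto simp: sym_on_def idx_def)
  also have "\<dots> = cross_sum K Y i j"
    unfolding cross_sum_def by (rule sum.swap)
  finally show ?thesis .
qed

lemma colour_exclusive_row_sum:
  assumes "colour_exclusive K Y i" "l < K"
  shows "(\<Sum>r<K. Y (l, i) (r, i)) = Y (l, i) (l, i)" "(\<Sum>r<K. Y (r, i) (l, i)) = Y (l, i) (l, i)"
  using assms by (simp_all add: colour_exclusive_def sum.neutral sum.remove[of "{..<K}" l])

lemma cross_sum_same_vertex: "colour_exclusive K Y i \<Longrightarrow> cross_sum K Y i i = diag_sum K Y i"
  by (simp add: cross_sum_def diag_sum_def colour_exclusive_row_sum)

definition compl_vec :: "nat \<Rightarrow> (nat \<times> nat) option \<Rightarrow> real" where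
  "compl_vec i x = (case x of None \<Rightarrow> 1 | Some (r, j) \<Rightarrow> if j = i then -1 else 0)"

lemma sum_bidx_compl_vec:
  "i < n \<Longrightarrow> (\<Sum>x\<in>bidx K n. f x * compl_vec i x) = f None - (\<Sum>r<K. f (Some (r, i)))"
  by (simp add: sum_bidx compl_vec_def if_distrib[of "\<lambda>z. _ * z"] sum_negf cong: if_cong)

lemma quad_form_bordered_compl_vec:
  assumes "i < n" "colour_exclusive K Y i"
  shows "quad_form (bidx K n) (bordered Y) (compl_vec i) = 1 - diag_sum K Y i"
proof -
  have "quad_form (bidx K n) (bordered Y) (compl_vec i)
      = (\<Sum>x\<in>bidx K n. (\<Sum>y\<in>bidx K n. bordered Y x y * compl_vec i y) * compl_vec i x)"
    unfolding quad_form_def by (simp add: sum_distrib_left sum_distrib_right mult_ac)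
  also have "\<dots> = 1 - diag_sum K Y i - (\<Sum>l<K. Y (l, i) (l, i) - (\<Sum>r<K. Y (l, i) (r, i)))"
    using assms(1) by (simp add: sum_bidx_compl_vec bordered_def diag_sum_def sum_subtractf)
  finally show ?thesis
    using assms(2) by (simp add: colour_exclusive_row_sum)
qed

lemma psd_bordered_row_sum_eq_diag:
  assumes "psd_on (bidx K n) (bordered Y)" "i < n" "colour_exclusive K Y i" "diag_sum K Y i = 1"
    and "l < K" "j < n"
  shows "(\<Sum>r<K. Y (l, j) (r, i)) = Y (l, j) (l, j)"
proof -
  have "quad_form (bidx K n) (bordered Y) (compl_vec i) = 0"
    using quad_form_bordered_compl_vec[OF assms(2,3)] assms(4) by simp
  moreover have "Some (l, j) \<in> bidx K n"
    using assms(5,6) by (simp add: bidx_def idx_def)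
  ultimately have "(\<Sum>x\<in>bidx K n. bordered Y (Some (l, j)) x * compl_vec i x) = 0"
    by (rule psd_on_kernel[OF assms(1) finite_bidx])
  then show ?thesis
    by (simp only: sum_bidx_compl_vec[OF assms(2)]) (simp add: bordered_def)
qed

lemma sum_add_mod: "(\<Sum>c<k. f ((c + r) mod k)) = (\<Sum>m<k. f (m::nat))"
  by (rule sum.reindex_bij_betw[OF bij_betw_add_mod])

definition rotate_colour :: "nat \<Rightarrow> nat \<Rightarrow> nat \<times> nat \<Rightarrow> nat \<times> nat" where
  "rotate_colour k c = (\<lambda>(r, i). ((r + c) mod k, i))"

definition cyclic_avg :: "nat \<Rightarrow> ((nat \<times> nat) \<Rightarrow> (nat \<times> nat) \<Rightarrow> real) \<Rightarrow> (nat \<times> nat) \<Rightarrow> (nat \<times> nat) \<Rightarrow> real" where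
  "cyclic_avg k Y a b = (\<Sum>c<k. Y (rotate_colour k c a) (rotate_colour k c b)) / real k"

lemma cyclic_avg_apply:
  "cyclic_avg k Y (r, i) (l, j) = (\<Sum>c<k. Y ((r + c) mod k, i) ((l + c) mod k, j)) / real k"
  by (simp add: cyclic_avg_def rotate_colour_def)

lemma cyclic_avg_diag: "0 < k \<Longrightarrow> cyclic_avg k Y (l, i) (l, i) = diag_sum k Y i / real k"
  using sum_add_mod[where f = "\<lambda>m. Y (m, i) (m, i)" and r = l] by (simp add: cyclic_avg_apply diag_sum_def add.commute)

lemma sum_cyclic_avg_column:
  assumes "0 < k"
  shows "(\<Sum>r<k. cyclic_avg k Y (r, i) (l, j)) = cross_sum k Y i j / real k"
proof -
  have "(\<Sum>r<k. \<Sum>c<k. Y ((r + c) mod k, i) ((l + c) mod k, j))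
      = (\<Sum>c<k. \<Sum>r<k. Y ((r + c) mod k, i) ((l + c) mod k, j))"
    by (rule sum.swap)
  also have "\<dots> = (\<Sum>c<k. \<Sum>r<k. Y (r, i) ((l + c) mod k, j))"
    by (simp only: sum_add_mod[where f = "\<lambda>m. Y (m, i) _"])
  also have "\<dots> = cross_sum k Y i j"
    unfolding cross_sum_def using sum_add_mod[where f = "\<lambda>m. Y (_, i) (m, j)" and r = l]
    by (subst sum.swap) (simp add: add.commute)
  finally show ?thesis
    by (simp add: cyclic_avg_apply flip: sum_divide_distrib)
qed

lemma diag_sum_cyclic_avg: "0 < k \<Longrightarrow> diag_sum k (cyclic_avg k Y) i = diag_sum k Y i"
  by (simp add: diag_sum_def[of k "cyclic_avg k Y"] cyclic_avg_diag)

lemma cross_sum_cyclic_avg: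
  assumes "0 < k"
  shows "cross_sum k (cyclic_avg k Y) i j = cross_sum k Y i j"
proof -
  have "cross_sum k (cyclic_avg k Y) i j = (\<Sum>l<k. \<Sum>r<k. cyclic_avg k Y (r, i) (l, j))"
    unfolding cross_sum_def by (rule sum.swap)
  then show ?thesis
    using assms by (simp add: sum_cyclic_avg_column)
qed

lemma objective_cyclic_avg: "0 < k \<Longrightarrow> objective n k (cyclic_avg k Y) = objective n k Y"
  by (simp add: objective_eq_sum_diag_sum diag_sum_cyclic_avg)

lemma psd_on_bordered_cyclic_avg:
  assumes "0 < k" "psd_on (bidx k n) (bordered Y)"
  shows "psd_on (bidx k n) (bordered (cyclic_avg k Y))"
proof -
  let ?rot = "\<lambda>c. map_option (rotate_colour k c)"
  have "?rot c ` bidx k n \<subseteq> bidx k n" for c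
    using assms(1) by (auto simp: bidx_def idx_def rotate_colour_def)
  then have "psd_on (bidx k n) (\<lambda>a b. bordered Y (?rot c a) (?rot c b))" for c
    by (rule psd_on_reindex[OF assms(2) finite_bidx])
  then have "psd_on (bidx k n) (\<lambda>a b. 1 / real k * (\<Sum>c<k. bordered Y (?rot c a) (?rot c b)))"
    by (intro psd_on_scale psd_on_sum) auto
  moreover have "bordered (cyclic_avg k Y) = (\<lambda>a b. 1 / real k * (\<Sum>c<k. bordered Y (?rot c a) (?rot c b)))"
  proof (intro ext)
    show "bordered (cyclic_avg k Y) a b = 1 / real k * (\<Sum>c<k. bordered Y (?rot c a) (?rot c b))" for a b
      using assms(1) by (cases a; cases b) (simp_all add: bordered_def cyclic_avg_def)
  qed
  ultimately show ?thesis
    by (simp only:)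
qed

definition feasible_base :: "nat \<Rightarrow> nat set set \<Rightarrow> nat \<Rightarrow> ((nat \<times> nat) \<Rightarrow> (nat \<times> nat) \<Rightarrow> real) \<Rightarrow> bool" where
  "feasible_base n E k Y \<longleftrightarrow>
     (\<forall>r<k. \<forall>i<n. \<forall>j<n. {i, j} \<in> E \<longrightarrow> Y (r, i) (r, j) = 0) \<and>
     (\<forall>i<n. colour_exclusive k Y i) \<and>
     (\<forall>a\<in>idx k n. \<forall>b\<in>idx k n. 0 \<le> Y a b) \<and>
     psd_on (bidx k n) (bordered Y)"

definition aggregate_ineqs :: "nat \<Rightarrow> nat \<Rightarrow> ((nat \<times> nat) \<Rightarrow> (nat \<times> nat) \<Rightarrow> real) \<Rightarrow> bool" where
  "aggregate_ineqs n k Y \<longleftrightarrow> (\<forall>i<n. \<forall>j<n.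
     0 \<le> 1 - diag_sum k Y i - diag_sum k Y j + cross_sum k Y i j \<and> cross_sum k Y i j \<le> diag_sum k Y i)"

lemma feasible_P2_iff:
  "feasible_P2 n E k Y \<longleftrightarrow> feasible_base n E k Y \<and>
     (\<forall>i<n. \<forall>j<n. j < i \<longrightarrow> 0 \<le> 1 - diag_sum k Y i - diag_sum k Y j + cross_sum k Y i j) \<and>
     (\<forall>i<n. \<forall>j<n. i \<noteq> j \<longrightarrow> (\<forall>l<k. (\<Sum>r<k. Y (r, i) (l, j)) \<le> Y (l, i) (l, i)))"
  unfolding feasible_P2_def feasible_base_def colour_exclusive_def diag_sum_def cross_sum_def
  by (auto dest: psd_on_bordered_imp_sym_on)

lemma feasible_P1_imp_feasible_base:
  assumes "feasible_P1 n E k Y"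
  shows "feasible_base n E k Y"
  using assms unfolding feasible_P1_def feasible_base_def colour_exclusive_def
  by (auto simp: idx_def intro: psd_on_bordered_mono)

lemma feasible_P1_last_block:
  assumes "feasible_P1 n E k Y" "l \<le> k" "i < n" "j < n"
  shows "Y (l, i) (k, j) = Y (l, i) (l, i) - (\<Sum>r<k. Y (l, i) (r, j))"
proof -
  have "(\<Sum>r<Suc k. Y (l, i) (r, j)) = Y (l, i) (l, i)"
    using assms by (intro psd_bordered_row_sum_eq_diag)
      (auto simp: feasible_P1_def colour_exclusive_def diag_sum_def)
  then show ?thesis
    by simp
qed

lemma feasible_P1_corner_block:
  assumes "feasible_P1 n E k Y" "i < n" "j < n"
  shows "Y (k, i) (k, j) = 1 - diag_sum k Y i - diag_sum k Y j + cross_sum k Y i j"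
proof -
  have sym: "sym_on (idx (Suc k) n) Y"
    using assms(1) by (simp add: feasible_P1_def)
  have "diag_sum k Y i + Y (k, i) (k, i) = 1"
    using assms(1,2) by (simp add: feasible_P1_def diag_sum_def)
  moreover have "(\<Sum>l<k. Y (k, i) (l, j)) = (\<Sum>l<k. Y (l, j) (k, i))"
    using sym assms(2,3) by (intro sum.cong refl) (simp add: sym_on_def idx_def)
  moreover have "\<dots> = diag_sum k Y j - cross_sum k Y j i"
    using assms by (simp add: feasible_P1_last_block diag_sum_def cross_sum_def sum_subtractf)
  moreover have "cross_sum k Y j i = cross_sum k Y i j"
    using psd_on_bordered_imp_sym_on feasible_P1_imp_feasible_base[OF assms(1)] assms(2,3)
    by (intro cross_sum_commute) (auto simp: feasible_base_def)
  ultimately show ?thesis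
    using feasible_P1_last_block[OF assms(1) order_refl assms(2,3)] by simp
qed

lemma feasible_P1_imp_aggregate_ineqs:
  assumes "feasible_P1 n E k Y"
  shows "aggregate_ineqs n k Y"
  unfolding aggregate_ineqs_def
proof (intro allI impI conjI)
  fix i j assume ij: "i < n" "j < n"
  have nonneg: "0 \<le> Y (l, i) (k, j)" if "l \<le> k" for l
    using assms ij that by (simp add: feasible_P1_def idx_def)
  show "0 \<le> 1 - diag_sum k Y i - diag_sum k Y j + cross_sum k Y i j"
    using nonneg[of k] feasible_P1_corner_block[OF assms ij] by simp
  have "(\<Sum>r<k. Y (l, i) (r, j)) \<le> Y (l, i) (l, i)" if "l < k" for l
    using nonneg[of l] feasible_P1_last_block[OF assms _ ij, of l] that by simp
  then show "cross_sum k Y i j \<le> diag_sum k Y i"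
    unfolding cross_sum_def diag_sum_def by (intro sum_mono) simp
qed

lemma feasible_P2_imp_aggregate_ineqs:
  assumes "feasible_P2 n E k Y"
  shows "aggregate_ineqs n k Y"
  unfolding aggregate_ineqs_def
proof (intro allI impI conjI)
  fix i j assume ij: "i < n" "j < n"
  have base: "feasible_base n E k Y"
    using assms by (simp add: feasible_P2_iff)
  then have excl: "colour_exclusive k Y i" and psd: "psd_on (bidx k n) (bordered Y)"
    using ij by (simp_all add: feasible_base_def)
  have commute: "cross_sum k Y j i = cross_sum k Y i j"
    using psd_on_bordered_imp_sym_on[OF psd] ij by (rule cross_sum_commute)
  have below_diag: "0 \<le> 1 - diag_sum k Y i' - diag_sum k Y j' + cross_sum k Y i' j'"
    if "j' < i'" "i' < n" for i' j'
    using assms that by (simp add: feasible_P2_iff)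
  show "0 \<le> 1 - diag_sum k Y i - diag_sum k Y j + cross_sum k Y i j"
  proof (cases i j rule: linorder_cases)
    case less
    then show ?thesis
      using below_diag[of i j] ij commute by simp
  next
    case equal
    have "0 \<le> 1 - diag_sum k Y i"
      using psd_on_quad_form_nonneg[OF psd] quad_form_bordered_compl_vec[OF ij(1) excl] by metis
    with equal show ?thesis
      using cross_sum_same_vertex[OF excl] by simp
  next
    case greater
    then show ?thesis
      using below_diag[of j i] ij by simp
  qed
  show "cross_sum k Y i j \<le> diag_sum k Y i"
  proof (cases "i = j")
    case True
    then show ?thesis
      using cross_sum_same_vertex[OF excl] by simp
  next
    case False
    then have "(\<Sum>l<k. \<Sum>r<k. Y (r, i) (l, j)) \<le> (\<Sum>l<k. Y (l, i) (l, i))"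
      using assms ij by (intro sum_mono) (simp add: feasible_P2_iff)
    moreover have "cross_sum k Y i j = (\<Sum>l<k. \<Sum>r<k. Y (r, i) (l, j))"
      unfolding cross_sum_def by (rule sum.swap)
    ultimately show ?thesis
      by (simp add: diag_sum_def)
  qed
qed

lemma feasible_base_cyclic_avg:
  assumes "0 < k" "feasible_base n E k Y"
  shows "feasible_base n E k (cyclic_avg k Y)"
  unfolding feasible_base_def
proof (intro conjI allI impI ballI)
  have rot: "(r + c) mod k < k" for r c
    using assms(1) by simp
  show "cyclic_avg k Y (r, i) (r, j) = 0" if "r < k" "i < n" "j < n" "{i, j} \<in> E" for r i j
    using assms(2) that rot by (simp add: feasible_base_def cyclic_avg_apply)
  show "colour_exclusive k (cyclic_avg k Y) i" if "i < n" for i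
  proof (unfold colour_exclusive_def, intro allI impI)
    fix r l assume "r < k" "l < k" "r \<noteq> l"
    then have "(r + c) mod k \<noteq> (l + c) mod k" for c
      by (metis inj_on_add_mod inj_onD lessThan_iff)
    then show "cyclic_avg k Y (r, i) (l, i) = 0"
      using assms(2) that rot by (simp add: feasible_base_def colour_exclusive_def cyclic_avg_apply)
  qed
  show "0 \<le> cyclic_avg k Y a b" if "a \<in> idx k n" "b \<in> idx k n" for a b
    using assms(2) that rot
    by (auto simp: feasible_base_def cyclic_avg_apply idx_def intro!: divide_nonneg_nonneg sum_nonneg)
  show "psd_on (bidx k n) (bordered (cyclic_avg k Y))"
    using assms by (simp add: feasible_base_def psd_on_bordered_cyclic_avg)
qed

lemma aggregate_ineqs_cyclic_avg: "0 < k \<Longrightarrow> aggregate_ineqs n k (cyclic_avg k Y) = aggregate_ineqs n k Y"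
  by (simp add: aggregate_ineqs_def diag_sum_cyclic_avg cross_sum_cyclic_avg)

lemma feasible_P2_cyclic_avg:
  assumes "0 < k" "feasible_base n E k Y" "aggregate_ineqs n k Y"
  shows "feasible_P2 n E k (cyclic_avg k Y)"
  unfolding feasible_P2_iff
proof (intro conjI allI impI)
  show "feasible_base n E k (cyclic_avg k Y)"
    using assms(1,2) by (rule feasible_base_cyclic_avg)
  show "0 \<le> 1 - diag_sum k (cyclic_avg k Y) i - diag_sum k (cyclic_avg k Y) j + cross_sum k (cyclic_avg k Y) i j"
    if "i < n" "j < n" for i j
    using assms(1,3) that by (simp add: aggregate_ineqs_def diag_sum_cyclic_avg cross_sum_cyclic_avg)
  show "(\<Sum>r<k. cyclic_avg k Y (r, i) (l, j)) \<le> cyclic_avg k Y (l, i) (l, i)"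
    if "i < n" "j < n" "l < k" for i j l
    using assms(1,3) that
    by (simp add: aggregate_ineqs_def sum_cyclic_avg_column cyclic_avg_diag divide_right_mono)
qed

text \<open>
  The appended block is the moment matrix of \<open>x\<^sub>k\<^sub>i = 1 - \<Sum>\<^sub>r\<^sub><\<^sub>k x\<^sub>r\<^sub>i\<close>; for a (P1) solution these are
  exactly its entries (\<open>feasible_P1_last_block\<close>, \<open>feasible_P1_corner_block\<close>).
\<close>

definition compl_extend :: "nat \<Rightarrow> ((nat \<times> nat) \<Rightarrow> (nat \<times> nat) \<Rightarrow> real) \<Rightarrow> (nat \<times> nat) \<Rightarrow> (nat \<times> nat) \<Rightarrow> real" where
  "compl_extend k Z = (\<lambda>(r, i) (l, j).
     if r < k \<and> l < k then Z (r, i) (l, j)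
     else if l < k then Z (l, j) (l, j) - (\<Sum>r'<k. Z (r', i) (l, j))
     else if r < k then Z (r, i) (r, i) - (\<Sum>l'<k. Z (r, i) (l', j))
     else 1 - diag_sum k Z i - diag_sum k Z j + cross_sum k Z i j)"

lemma compl_extend_apply:
  "compl_extend k Z (r, i) (l, j) =
     (if r < k \<and> l < k then Z (r, i) (l, j)
      else if l < k then Z (l, j) (l, j) - (\<Sum>r'<k. Z (r', i) (l, j))
      else if r < k then Z (r, i) (r, i) - (\<Sum>l'<k. Z (r, i) (l', j))
      else 1 - diag_sum k Z i - diag_sum k Z j + cross_sum k Z i j)"
  by (simp add: compl_extend_def)

lemma objective_compl_extend: "objective n k (compl_extend k Z) = objective n k Z"
  by (simp add: objective_def compl_extend_apply)

definition compl_lift :: "nat \<Rightarrow> (nat \<times> nat) option \<Rightarrow> (nat \<times> nat) option \<Rightarrow> real" where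
  "compl_lift k a x = (case a of
       None \<Rightarrow> if x = None then 1 else 0
     | Some (r, i) \<Rightarrow> if r < k then (if x = a then 1 else 0) else compl_vec i x)"

lemma sum_compl_lift:
  assumes "a \<in> bidx (Suc k) n"
  shows "(\<Sum>x\<in>bidx k n. compl_lift k a x * f x) = (case a of
       None \<Rightarrow> f None
     | Some (r, i) \<Rightarrow> if r < k then f a else f None - (\<Sum>r'<k. f (Some (r', i))))"
proof (cases a)
  case None
  moreover have "None \<in> bidx k n"
    by (simp add: bidx_def)
  ultimately show ?thesis
    by (simp add: compl_lift_def if_distrib[of "\<lambda>z. z * _"] cong: if_cong)
next
  case (Some p)
  then obtain r i where a: "a = Some (r, i)" "r < Suc k" "i < n"
    using assms by (cases p) (auto simp: bidx_def idx_def)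
  show ?thesis
  proof (cases "r < k")
    case True
    with a have "a \<in> bidx k n"
      by (simp add: bidx_def idx_def)
    with a True show ?thesis
      by (simp add: compl_lift_def if_distrib[of "\<lambda>z. z * _"] cong: if_cong)
  next
    case False
    with a show ?thesis
      using sum_bidx_compl_vec[OF a(3), of f k] by (simp add: compl_lift_def mult.commute)
  qed
qed

lemma bordered_compl_extend:
  assumes "\<forall>i<n. colour_exclusive k Z i" "a \<in> bidx (Suc k) n" "b \<in> bidx (Suc k) n"
  shows "bordered (compl_extend k Z) a b
    = (\<Sum>x\<in>bidx k n. \<Sum>y\<in>bidx k n. compl_lift k a x * bordered Z x y * compl_lift k b y)"
proof -
  have "(\<Sum>x\<in>bidx k n. \<Sum>y\<in>bidx k n. compl_lift k a x * bordered Z x y * compl_lift k b y)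
      = (\<Sum>x\<in>bidx k n. compl_lift k a x * (\<Sum>y\<in>bidx k n. compl_lift k b y * bordered Z x y))"
    by (simp add: sum_distrib_left mult_ac)
  moreover have same_vertex: "(\<Sum>r<k. \<Sum>l<k. Z (r, j) (l, j)) = (\<Sum>r<k. Z (r, j) (r, j))" if "j < n" for j
    using cross_sum_same_vertex assms(1) that by (simp add: cross_sum_def diag_sum_def)
  ultimately show ?thesis
    unfolding sum_compl_lift[OF assms(3)] sum_compl_lift[OF assms(2)]
    using assms by (cases a; cases b)
      (auto simp: bordered_def compl_extend_apply bidx_def idx_def diag_sum_def cross_sum_def sum_subtractf)
qed

lemma psd_on_bordered_compl_extend:
  assumes "psd_on (bidx k n) (bordered Z)" "\<forall>i<n. colour_exclusive k Z i"
  shows "psd_on (bidx (Suc k) n) (bordered (compl_extend k Z))"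
  by (rule psd_on_congruence[OF assms(1)], rule bordered_compl_extend[OF assms(2)])

lemma feasible_P1_compl_extend:
  assumes base: "feasible_base n E k Z" and aggregate: "aggregate_ineqs n k Z"
    and column: "\<And>i j l. i < n \<Longrightarrow> j < n \<Longrightarrow> l < k \<Longrightarrow> (\<Sum>r<k. Z (r, i) (l, j)) \<le> Z (l, j) (l, j)"
  shows "feasible_P1 n E k (compl_extend k Z)"
  unfolding feasible_P1_def
proof (intro conjI allI impI ballI)
  have excl: "\<forall>i<n. colour_exclusive k Z i" and psd: "psd_on (bidx k n) (bordered Z)"
    using base by (simp_all add: feasible_base_def)
  have psd_ext: "psd_on (bidx (Suc k) n) (bordered (compl_extend k Z))"
    using psd excl by (rule psd_on_bordered_compl_extend)
  then show "psd_on (bidx (Suc k) n) (bordered (compl_extend k Z))" .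
  show "sym_on (idx (Suc k) n) (compl_extend k Z)"
    using psd_ext by (rule psd_on_bordered_imp_sym_on)
  show "compl_extend k Z (r, i) (r, j) = 0" if "r < k" "i < n" "j < n" "{i, j} \<in> E" for r i j
    using base that by (simp add: feasible_base_def compl_extend_apply)
  show "(\<Sum>r<Suc k. compl_extend k Z (r, i) (r, i)) = 1" if "i < n" for i
    using cross_sum_same_vertex excl that by (simp add: compl_extend_apply diag_sum_def)
  show "compl_extend k Z (r, i) (l, i) = 0" if "i < n" "r < Suc k" "l < Suc k" "r \<noteq> l" for i r l
    using excl that by (auto simp: compl_extend_apply colour_exclusive_row_sum colour_exclusive_def)
  show "0 \<le> compl_extend k Z a b" if ab_mem: "a \<in> idx (Suc k) n" "b \<in> idx (Suc k) n" for a b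
  proof -
    obtain r i l j where ab: "a = (r, i)" "b = (l, j)" "r < Suc k" "l < Suc k" "i < n" "j < n"
      using ab_mem by (cases a, cases b) (auto simp: idx_def)
    have sym: "sym_on (idx k n) Z"
      using psd by (rule psd_on_bordered_imp_sym_on)
    have "(\<Sum>l'<k. Z (r, i) (l', j)) = (\<Sum>l'<k. Z (l', j) (r, i))" if "r < k"
      using sym ab that by (intro sum.cong refl) (simp add: sym_on_def idx_def)
    then show ?thesis
      using ab base aggregate column[of i j l] column[of j i r]
      by (auto simp: compl_extend_apply feasible_base_def aggregate_ineqs_def idx_def)
  qed
qed

lemma feasible_P2_of_feasible_P1:
  assumes "0 < k" "feasible_P1 n E k Y"
  shows "feasible_P2 n E k (cyclic_avg k Y)"
  using assms(1) feasible_P1_imp_feasible_base[OF assms(2)] feasible_P1_imp_aggregate_ineqs[OF assms(2)]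
  by (rule feasible_P2_cyclic_avg)

lemma feasible_P1_of_feasible_P2:
  assumes "0 < k" "feasible_P2 n E k Y"
  shows "feasible_P1 n E k (compl_extend k (cyclic_avg k Y))"
proof (rule feasible_P1_compl_extend)
  have base: "feasible_base n E k Y" and aggregate: "aggregate_ineqs n k Y"
    using assms(2) feasible_P2_imp_aggregate_ineqs by (simp_all add: feasible_P2_iff)
  then show "feasible_base n E k (cyclic_avg k Y)" "aggregate_ineqs n k (cyclic_avg k Y)"
    using assms(1) by (simp_all add: feasible_base_cyclic_avg aggregate_ineqs_cyclic_avg)
  have sym: "sym_on (idx k n) Y"
    using base psd_on_bordered_imp_sym_on by (simp add: feasible_base_def)
  show "(\<Sum>r<k. cyclic_avg k Y (r, i) (l, j)) \<le> cyclic_avg k Y (l, j) (l, j)"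
    if "i < n" "j < n" "l < k" for i j l
  proof -
    have "cross_sum k Y j i \<le> diag_sum k Y j"
      using aggregate that by (simp add: aggregate_ineqs_def)
    then show ?thesis
      using assms(1) that cross_sum_commute[OF sym, of i j]
      by (simp add: sum_cyclic_avg_column cyclic_avg_diag divide_right_mono)
  qed
qed

theorem theorem2:
  fixes n k :: nat and E :: "nat set set"
  assumes "simple_graph n E" and "1 \<le> k"
  shows "(\<forall>Y. feasible_P1 n E k Y \<longrightarrow>
            (\<exists>Y'. feasible_P2 n E k Y' \<and> objective n k Y' = objective n k Y)) \<and>
         (\<forall>Y. feasible_P2 n E k Y \<longrightarrow>
            (\<exists>Y'. feasible_P1 n E k Y' \<and> objective n k Y' = objective n k Y)) \<and>
         Sup (objective n k ` {Y. feasible_P1 n E k Y}) =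
         Sup (objective n k ` {Y. feasible_P2 n E k Y})"
proof -
  have k: "0 < k"
    using assms(2) by simp
  have P1_to_P2: "\<forall>Y. feasible_P1 n E k Y \<longrightarrow>
      (\<exists>Y'. feasible_P2 n E k Y' \<and> objective n k Y' = objective n k Y)"
    using feasible_P2_of_feasible_P1[OF k] objective_cyclic_avg[OF k] by blast
  have P2_to_P1: "\<forall>Y. feasible_P2 n E k Y \<longrightarrow>
      (\<exists>Y'. feasible_P1 n E k Y' \<and> objective n k Y' = objective n k Y)"
    using feasible_P1_of_feasible_P2[OF k] objective_compl_extend objective_cyclic_avg[OF k] by metis
  have "objective n k ` {Y. feasible_P1 n E k Y} = objective n k ` {Y. feasible_P2 n E k Y}"
    using P1_to_P2 P2_to_P1 by (auto simp: image_iff) metis+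
  with P1_to_P2 P2_to_P1 show ?thesis
    by simp
qed

end
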